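(* Let $\Sigma$ be an alphabet with $|\Sigma|\ge3$, $k\ge1$, and $f\colon(\Sigma^* )^k\to\Sigma^*$ RCP. Then exactly one of the following holds: ($C_1$) there exists $b\in\Sigma$ such that $f(x_1,\ldots,x_k)\in b\Sigma^*$ for all $x_1,\ldots,x_k\in\Sigma^*$; ($C_2$) there exists $i\in\{1,\ldots,k\}$ such that $f(x_1,\ldots,x_k)\in x_i\Sigma^*$ for all $x_1,\ldots,x_k\in\Sigma^*$; ($C_3$) $f(x_1,\ldots,x_k)=\varepsilon$ for all $x_1,\ldots,x_k\in\Sigma^*$.
   Context: $\Sigma^*$ is the free monoid over $\Sigma$ (finite words, concatenation, empty word $\varepsilon$). For a word $w$, $w\Sigma^*$ denotes the set of words having $w$ as a prefix. A function $f\colon(\Sigma^* )^k\to\Sigma^*$ is RCP if for every monoid morphism $\varphi\colon\Sigma^*\to\Sigma^*$ and all $u_1,\ldots,u_k,v_1,\ldots,v_k$ with $\varphi(u_i)=\varphi(v_i)$ for all $i$, we have $\varphi(f(u_1,\ldots,u_k))=\varphi(f(v_1,\ldots,v_k))$. *)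

theory Defs
  imports Main
begin

text \<open>Words over the alphabet 'a are lists; concatenation is append, the empty word is Nil.
A k-tuple of words is a list of words of length k.\<close>

definition monoid_morphism :: "('a list \<Rightarrow> 'a list) \<Rightarrow> bool" where
  "monoid_morphism \<phi> \<longleftrightarrow> \<phi> [] = [] \<and> (\<forall>u v. \<phi> (u @ v) = \<phi> u @ \<phi> v)"

definition prefix_set :: "'a list \<Rightarrow> 'a list set" where
  "prefix_set w = {w @ z | z. True}"

definition RCP :: "nat \<Rightarrow> ('a list list \<Rightarrow> 'a list) \<Rightarrow> bool" where
  "RCP k f \<longleftrightarrow> (\<forall>\<phi> us vs. monoid_morphism \<phi> \<longrightarrow> length us = k \<longrightarrow> length vs = k \<longrightarrow>
      (\<forall>i<k. \<phi> (us ! i) = \<phi> (vs ! i)) \<longrightarrow> \<phi> (f us) = \<phi> (f vs))"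

end

theory Submission
  imports Defs "HOL-Library.Sublist"
begin

text \<open>With at least three letters an RCP function is governed by the first letter of its values,
  so we track \<open>take 1\<close> of them: a constant \<open>take 1\<close> equal to \<open>[b]\<close> or \<open>[]\<close> is case
  \<open>C\<^sub>1\<close> or \<open>C\<^sub>3\<close>.

  For one argument, identifying two letters shows that the first letter of \<open>g [d]\<close> is either
  \<open>d\<close> for every \<open>d\<close> or independent of \<open>d\<close>, and erasing a letter extends this to \<open>g []\<close>.
  It spreads to all words by induction on the number of distinct letters: a word is identified
  with simpler words by two nonerasing morphisms that jointly separate first letters, and such a
  pair reflects prefixes.

  For \<open>k + 1\<close> arguments, fixing the last argument gives \<open>k\<close>-ary RCP functions and fixing the
  others gives unary ones. Evaluating at tuples of single letters shows that the two families of
  slices can only combine into one of the three global shapes.\<close>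

section \<open>Letter-to-word morphisms\<close>

definition morph :: "('a \<Rightarrow> 'a list) \<Rightarrow> 'a list \<Rightarrow> 'a list" where
  "morph h w = concat (map h w)"

lemma morph_Nil [simp]: "morph h [] = []"
  and morph_Cons [simp]: "morph h (x # w) = h x @ morph h w"
  and morph_append [simp]: "morph h (u @ v) = morph h u @ morph h v"
  by (simp_all add: morph_def)

lemma morph_letterwise [simp]: "morph (\<lambda>x. [\<sigma> x]) w = map \<sigma> w"
  by (induction w) auto

lemma morph_fresh_subst_eq:
  "c \<notin> set z \<Longrightarrow> morph ((\<lambda>x. [x])(c := z)) z = morph ((\<lambda>x. [x])(c := z)) [c]"
proof -
  assume "c \<notin> set z"
  then have "morph ((\<lambda>x. [x])(c := u)) z = z" for u
    by (induction z) auto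
  then show ?thesis
    by simp
qed

lemma morph_erase [simp]: "morph ((\<lambda>x. [x])(d := [])) w = filter (\<lambda>x. x \<noteq> d) w"
  by (induction w) auto

lemma morph_eq_Nil_iff: "\<forall>x. h x \<noteq> [] \<Longrightarrow> morph h w = [] \<longleftrightarrow> w = []"
  by (cases w) auto

lemma prefix_morph: "prefix u v \<Longrightarrow> prefix (morph h u) (morph h v)"
  by (auto simp: prefix_def)

lemma monoid_morphism_morph: "monoid_morphism (morph h)"
  by (simp add: monoid_morphism_def)

lemma take_one_eq_singleton_iff: "take 1 w = [b] \<longleftrightarrow> prefix [b] w"
  by (cases w) auto

lemma take_one_prefix: "prefix u v \<Longrightarrow> u \<noteq> [] \<Longrightarrow> take 1 v = take 1 u"
  by (cases u) (auto simp: prefix_def)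

lemma hd_prefix: "prefix u v \<Longrightarrow> u \<noteq> [] \<Longrightarrow> hd v = hd u"
  by (cases u) (auto simp: prefix_def)

lemma ex_third_letter:
  assumes "card (UNIV :: 'a::finite set) \<ge> 3"
  shows "\<exists>z::'a. z \<noteq> x \<and> z \<noteq> y"
proof -
  have "card {x, y} \<le> 2"
    by (simp add: card_insert_if)
  with assms have "{x, y} \<noteq> UNIV"
    by auto
  then show ?thesis
    by blast
qed

definition separating_pair :: "('a \<Rightarrow> 'a list) \<Rightarrow> ('a \<Rightarrow> 'a list) \<Rightarrow> bool" where
  "separating_pair h\<^sub>1 h\<^sub>2 \<longleftrightarrow> (\<forall>x. h\<^sub>1 x \<noteq> [] \<and> h\<^sub>2 x \<noteq> [])
    \<and> (\<forall>s t. s \<noteq> t \<longrightarrow> hd (h\<^sub>1 s) \<noteq> hd (h\<^sub>1 t) \<or> hd (h\<^sub>2 s) \<noteq> hd (h\<^sub>2 t))"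

lemma prefix_by_separating_pair:
  assumes "separating_pair h\<^sub>1 h\<^sub>2"
    and "prefix (morph h\<^sub>1 u) (morph h\<^sub>1 v)" and "prefix (morph h\<^sub>2 u) (morph h\<^sub>2 v)"
  shows "prefix u v"
  using assms(2,3)
proof (induction u arbitrary: v)
  case Nil
  then show ?case by simp
next
  case (Cons s u)
  have nonerasing: "h\<^sub>1 x \<noteq> []" "h\<^sub>2 x \<noteq> []" for x
    using assms(1) by (simp_all add: separating_pair_def)
  then obtain t v' where v: "v = t # v'"
    using Cons.prems(1) by (cases v) (auto simp: prefix_def)
  have "hd (h\<^sub>1 s) = hd (h\<^sub>1 t)" "hd (h\<^sub>2 s) = hd (h\<^sub>2 t)"
    using hd_prefix[OF Cons.prems(1)] hd_prefix[OF Cons.prems(2)] nonerasing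
    by (simp_all add: v)
  then have "s = t"
    using assms(1) by (auto simp: separating_pair_def)
  then show ?case
    using Cons by (simp add: v)
qed

lemma morph_merge_eq:
  "a \<noteq> c \<Longrightarrow> morph (\<lambda>x. [(id(c := a)) x]) z = morph (\<lambda>x. [(id(c := a)) x]) (map (id(c := a)) z)"
  by (induction z) auto

lemma card_set_map_merge_less:
  assumes "c \<in> set z" "a \<in> set z" "a \<noteq> c"
  shows "card (set (map (id(c := a)) z)) < card (set z)"
proof -
  have "set (map (id(c := a)) z) \<subseteq> set z - {c}"
    using assms by auto
  then have "card (set (map (id(c := a)) z)) \<le> card (set z - {c})"
    by (simp add: card_mono)
  also have "\<dots> < card (set z)"
    using assms(1) by (metis card_Diff1_less finite_set)
  finally show ?thesis .
qed

lemma finite_set_cases_by_card: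
  assumes "finite A"
  obtains "A = {}" | a where "A = {a}" | a e where "a \<noteq> e" "A = {a, e}"
    | a c d where "{a, c, d} \<subseteq> A" "a \<noteq> c" "a \<noteq> d" "c \<noteq> d"
proof -
  consider "card A = 0" | "card A = 1" | "card A = 2" | "card A \<ge> 3"
    by linarith
  then show ?thesis
  proof cases
    case 1
    then show ?thesis using that(1) assms by simp
  next
    case 2
    then show ?thesis using that(2) by (auto simp: card_1_singleton_iff)
  next
    case 3
    then show ?thesis using that(3) by (auto simp: card_2_iff)
  next
    case 4
    then obtain B where "B \<subseteq> A" "card B = 3"
      by (meson obtain_subset_with_card_n)
    then show ?thesis
      using that(4) unfolding card_3_iff by blast
  qed
qed

text \<open>Every nonempty word is identified, by each morphism of a separating pair, with a single
  letter or with a word over fewer distinct letters: a letter absent from the word is substituted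
  by the whole word, or two of its letters are merged.\<close>

lemma separating_reduction:
  fixes z :: "'a::finite list"
  assumes three: "card (UNIV :: 'a set) \<ge> 3" and "z \<noteq> []"
  obtains h\<^sub>1 h\<^sub>2 z\<^sub>1 z\<^sub>2 where "separating_pair h\<^sub>1 h\<^sub>2"
    and "morph h\<^sub>1 z = morph h\<^sub>1 z\<^sub>1" "length z\<^sub>1 = 1 \<or> card (set z\<^sub>1) < card (set z)"
    and "morph h\<^sub>2 z = morph h\<^sub>2 z\<^sub>2" "length z\<^sub>2 = 1 \<or> card (set z\<^sub>2) < card (set z)"
proof -
  have hd_z: "hd z \<in> set z"
    using \<open>z \<noteq> []\<close> by simp
  from finite_set_cases_by_card[OF finite_set[of z]] show ?thesis
  proof cases
    case 1
    then show ?thesis using \<open>z \<noteq> []\<close> by simp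
  next
    case (2 a)
    obtain c\<^sub>1 where c\<^sub>1: "c\<^sub>1 \<noteq> a"
      using ex_third_letter[OF three, of a a] by blast
    obtain c\<^sub>2 where c\<^sub>2: "c\<^sub>2 \<noteq> a" "c\<^sub>2 \<noteq> c\<^sub>1"
      using ex_third_letter[OF three, of a c\<^sub>1] by blast
    show ?thesis
    proof (rule that[of "(\<lambda>x. [x])(c\<^sub>1 := z)" "(\<lambda>x. [x])(c\<^sub>2 := z)" "[c\<^sub>1]" "[c\<^sub>2]"])
      show "separating_pair ((\<lambda>x. [x])(c\<^sub>1 := z)) ((\<lambda>x. [x])(c\<^sub>2 := z))"
        using 2 hd_z c\<^sub>1 c\<^sub>2 \<open>z \<noteq> []\<close> by (auto simp: separating_pair_def)
    qed (use 2 c\<^sub>1 c\<^sub>2 in \<open>simp_all add: morph_fresh_subst_eq\<close>)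
  next
    case (3 a e)
    obtain c where c: "c \<noteq> a" "c \<noteq> e"
      using ex_third_letter[OF three, of a e] by blast
    show ?thesis
    proof (rule that[of "(\<lambda>x. [x])(c := z)" "\<lambda>x. [(id(a := e)) x]" "[c]" "map (id(a := e)) z"])
      show "separating_pair ((\<lambda>x. [x])(c := z)) (\<lambda>x. [(id(a := e)) x])"
        using 3 hd_z c \<open>z \<noteq> []\<close> by (auto simp: separating_pair_def)
    qed (use 3 c in \<open>simp_all add: morph_fresh_subst_eq morph_merge_eq card_set_map_merge_less\<close>)
  next
    case (4 a c d)
    show ?thesis
    proof (rule that[of "\<lambda>x. [(id(c := a)) x]" "\<lambda>x. [(id(c := d)) x]"
          "map (id(c := a)) z" "map (id(c := d)) z"])
      show "separating_pair (\<lambda>x. [(id(c := a)) x]) (\<lambda>x. [(id(c := d)) x])"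
        using 4 by (auto simp: separating_pair_def)
      show "length (map (id(c := a)) z) = 1 \<or> card (set (map (id(c := a)) z)) < card (set z)"
        using 4 card_set_map_merge_less[of c z a] by simp
      show "length (map (id(c := d)) z) = 1 \<or> card (set (map (id(c := d)) z)) < card (set z)"
        using 4 card_set_map_merge_less[of c z d] by simp
    qed (use 4 in \<open>simp_all add: morph_merge_eq\<close>)
  qed
qed

lemma prefix_invariant_from_letters:
  fixes g tgt :: "'a::finite list \<Rightarrow> 'a list"
  assumes three: "card (UNIV :: 'a set) \<ge> 3"
    and base_Nil: "prefix (tgt []) (g [])" and base_letter: "\<And>d. prefix (tgt [d]) (g [d])"
    and transfer: "\<And>h z z'. \<forall>x. h x \<noteq> [] \<Longrightarrow> morph h z = morph h z' \<Longrightarrow>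
      prefix (tgt z') (g z') \<Longrightarrow> prefix (morph h (tgt z)) (morph h (g z))"
  shows "prefix (tgt z) (g z)"
proof (induction "card (set z)" arbitrary: z rule: less_induct)
  case less
  show ?case
  proof (cases "z = []")
    case False
    obtain h\<^sub>1 h\<^sub>2 z\<^sub>1 z\<^sub>2 where pair: "separating_pair h\<^sub>1 h\<^sub>2"
      and z\<^sub>1: "morph h\<^sub>1 z = morph h\<^sub>1 z\<^sub>1" "length z\<^sub>1 = 1 \<or> card (set z\<^sub>1) < card (set z)"
      and z\<^sub>2: "morph h\<^sub>2 z = morph h\<^sub>2 z\<^sub>2" "length z\<^sub>2 = 1 \<or> card (set z\<^sub>2) < card (set z)"
      using separating_reduction[OF three False] by blast
    have reduced: "prefix (tgt z') (g z')" if "length z' = 1 \<or> card (set z') < card (set z)" for z'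
      using that less base_letter by (auto simp: length_Suc_conv)
    have "\<forall>x. h\<^sub>1 x \<noteq> []" "\<forall>x. h\<^sub>2 x \<noteq> []"
      using pair by (simp_all add: separating_pair_def)
    then show ?thesis
      using prefix_by_separating_pair[OF pair] transfer z\<^sub>1 z\<^sub>2 reduced by blast
  qed (simp add: base_Nil)
qed

section \<open>Functions of one argument\<close>

definition RCP_unary :: "('a list \<Rightarrow> 'a list) \<Rightarrow> bool" where
  "RCP_unary g \<longleftrightarrow> (\<forall>h u v. morph h u = morph h v \<longrightarrow> morph h (g u) = morph h (g v))"

lemma RCP_unaryD: "RCP_unary g \<Longrightarrow> morph h u = morph h v \<Longrightarrow> morph h (g u) = morph h (g v)"
  unfolding RCP_unary_def by blast

lemma letter_map_id_or_constant:
  fixes \<sigma> :: "'a::finite \<Rightarrow> 'a"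
  assumes three: "card (UNIV :: 'a set) \<ge> 3"
    and merge: "\<And>d e. (id(d := e)) (\<sigma> d) = (id(d := e)) (\<sigma> e)"
  shows "\<sigma> = id \<or> (\<exists>b. \<forall>d. \<sigma> d = b)"
proof (cases "\<sigma> = id")
  case False
  then obtain d where d: "\<sigma> d \<noteq> d"
    by (auto simp: fun_eq_iff)
  define b where "b = \<sigma> d"
  have off_d_b: "\<sigma> e = b" if "e \<noteq> d" "e \<noteq> b" for e
    using merge[of d e] that d by (auto simp: b_def split: if_splits)
  obtain e where e: "e \<noteq> d" "e \<noteq> b"
    using ex_third_letter[OF three] by blast
  have "\<sigma> b = b"
    using merge[of d b] merge[of e b] off_d_b[OF e] e d by (auto simp: b_def split: if_splits)
  then have "\<sigma> x = b" for x
    using off_d_b by (cases "x = d") (auto simp: b_def)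
  then show ?thesis
    by blast
qed simp

lemma take_one_filter: "\<forall>x \<in> set (take 1 w). P x \<Longrightarrow> take 1 (filter P w) = take 1 w"
  by (cases w) auto

lemma take_one_from_filters:
  fixes w t :: "'a::finite list"
  assumes three: "card (UNIV :: 'a set) \<ge> 3" and "length t \<le> 1"
    and filters: "\<And>e. e \<notin> set t \<Longrightarrow> take 1 (filter (\<lambda>x. x \<noteq> e) w) = t"
  shows "take 1 w = t"
proof -
  have set_t: "set t \<subseteq> {hd t}"
    using \<open>length t \<le> 1\<close> by (cases t) auto
  obtain e where e: "e \<noteq> hd t" "e \<noteq> hd w"
    using ex_third_letter[OF three] by blast
  then have "take 1 (filter (\<lambda>x. x \<noteq> e) w) = take 1 w"
    by (intro take_one_filter) (cases w; simp)
  then show ?thesis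
    using filters[of e] e set_t by auto
qed

lemma RCP_unary_on_singletons:
  fixes g :: "'a::finite list \<Rightarrow> 'a list"
  assumes three: "card (UNIV :: 'a set) \<ge> 3" and R: "RCP_unary g"
  shows "(\<exists>t. \<forall>d. take 1 (g [d]) = t) \<or> (\<forall>d. take 1 (g [d]) = [d])"
proof -
  have merge: "map (id(d := e)) (g [d]) = map (id(d := e)) (g [e])" for d e
    using RCP_unaryD[OF R, of "\<lambda>x. [(id(d := e)) x]" "[d]" "[e]"] by (simp add: fun_upd_def)
  show ?thesis
  proof (cases "\<exists>d. g [d] = []")
    case True
    then obtain d where "g [d] = []"
      by blast
    then have "g [e] = []" for e
      using arg_cong[OF merge[of d e], of length] by simp
    then show ?thesis
      by auto
  next
    case False
    then have take_hd: "take 1 (g [d]) = [hd (g [d])]" for d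
      by (cases "g [d]") auto
    have "(id(d := e)) (hd (g [d])) = (id(d := e)) (hd (g [e]))" for d e
      using arg_cong[OF merge[of d e], of hd] False by (simp add: hd_map)
    then have "(\<lambda>d. hd (g [d])) = id \<or> (\<exists>b. \<forall>d. hd (g [d]) = b)"
      by (rule letter_map_id_or_constant[OF three])
    then show ?thesis
      unfolding take_hd fun_eq_iff by auto
  qed
qed

lemma RCP_unary_on_letters:
  fixes g :: "'a::finite list \<Rightarrow> 'a list"
  assumes three: "card (UNIV :: 'a set) \<ge> 3" and R: "RCP_unary g"
  shows "(\<exists>t. take 1 (g []) = t \<and> (\<forall>d. take 1 (g [d]) = t)) \<or> (\<forall>d. prefix [d] (g [d]))"
  using RCP_unary_on_singletons[OF three R]
proof
  assume "\<exists>t. \<forall>d. take 1 (g [d]) = t"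
  then obtain t where t: "\<And>d. take 1 (g [d]) = t"
    by blast
  have erase: "filter (\<lambda>x. x \<noteq> d) (g [d]) = filter (\<lambda>x. x \<noteq> d) (g [])" for d
    using RCP_unaryD[OF R, of "(\<lambda>x. [x])(d := [])" "[d]" "[]"] by simp
  have "take 1 (g []) = t"
  proof (rule take_one_from_filters[OF three])
    show "length t \<le> 1"
      using t[of undefined] by auto
    show "take 1 (filter (\<lambda>x. x \<noteq> e) (g [])) = t" if "e \<notin> set t" for e
      using take_one_filter[of "g [e]" "\<lambda>x. x \<noteq> e"] t[of e] that by (force simp: erase)
  qed
  with t show ?thesis
    by blast
qed (use take_one_eq_singleton_iff in metis)

lemma RCP_unary_vanishing:
  fixes g :: "'a::finite list \<Rightarrow> 'a list"
  assumes three: "card (UNIV :: 'a set) \<ge> 3" and R: "RCP_unary g"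
    and "g [] = []" and letters: "\<And>d. g [d] = []"
  shows "g z = []"
proof -
  fix a :: 'a
  obtain c where "c \<noteq> a"
    using ex_third_letter[OF three, of a a] by blast
  have power: "g (replicate n a) = []" for n
  proof (cases n)
    case (Suc m)
    let ?h = "(\<lambda>x. [x])(c := replicate n a)"
    have "morph ?h (replicate n a) = morph ?h [c]"
      using \<open>c \<noteq> a\<close> by (intro morph_fresh_subst_eq) simp
    then have "morph ?h (g (replicate n a)) = morph ?h (g [c])"
      by (rule RCP_unaryD[OF R])
    then have "morph ?h (g (replicate n a)) = []"
      using letters by simp
    moreover have "\<forall>x. ?h x \<noteq> []"
      using Suc by simp
    ultimately show ?thesis
      using morph_eq_Nil_iff by blast
  qed (simp add: \<open>g [] = []\<close>)
  have "morph (\<lambda>_. [a]) z = morph (\<lambda>_. [a]) (replicate (length z) a)"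
    by (simp add: map_replicate_const)
  then have "morph (\<lambda>_. [a]) (g z) = morph (\<lambda>_. [a]) (g (replicate (length z) a))"
    by (rule RCP_unaryD[OF R])
  then have "morph (\<lambda>_. [a]) (g z) = []"
    by (simp add: power)
  then show ?thesis
    by (simp add: morph_eq_Nil_iff)
qed

lemma RCP_unary_prefix_letter:
  fixes g :: "'a::finite list \<Rightarrow> 'a list"
  assumes three: "card (UNIV :: 'a set) \<ge> 3" and R: "RCP_unary g"
    and "prefix [b] (g [])" and "\<And>d. prefix [b] (g [d])"
  shows "prefix [b] (g z)"
proof (rule prefix_invariant_from_letters[OF three, where tgt = "\<lambda>_. [b]" and g = g])
  fix h :: "'a \<Rightarrow> 'a list" and z z' :: "'a list"
  assume eq: "morph h z = morph h z'" and "prefix [b] (g z')"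
  then have "prefix (morph h [b]) (morph h (g z'))"
    by (intro prefix_morph)
  then show "prefix (morph h [b]) (morph h (g z))"
    using RCP_unaryD[OF R eq] by simp
qed (use assms in simp_all)

lemma RCP_unary_prefix_argument:
  fixes g :: "'a::finite list \<Rightarrow> 'a list"
  assumes three: "card (UNIV :: 'a set) \<ge> 3" and R: "RCP_unary g"
    and "\<And>d. prefix [d] (g [d])"
  shows "prefix z (g z)"
proof -
  have "prefix (id z) (g z)"
  proof (rule prefix_invariant_from_letters[OF three, where tgt = id and g = g])
    fix h :: "'a \<Rightarrow> 'a list" and z z' :: "'a list"
    assume eq: "morph h z = morph h z'" and "prefix (id z') (g z')"
    then have "prefix (morph h z') (morph h (g z'))"
      by (intro prefix_morph) simp
    then show "prefix (morph h (id z)) (morph h (g z))"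
      using RCP_unaryD[OF R eq] eq by simp
  qed (use assms in simp_all)
  then show ?thesis
    by simp
qed

lemma RCP_unary_cases:
  fixes g :: "'a::finite list \<Rightarrow> 'a list"
  assumes three: "card (UNIV :: 'a set) \<ge> 3" and R: "RCP_unary g"
  shows "(\<exists>t. \<forall>z. take 1 (g z) = t) \<or> (\<forall>z. prefix z (g z))"
  using RCP_unary_on_letters[OF three R]
proof
  assume "\<exists>t. take 1 (g []) = t \<and> (\<forall>d. take 1 (g [d]) = t)"
  then obtain t where t: "take 1 (g []) = t" "\<And>d. take 1 (g [d]) = t"
    by blast
  show ?thesis
  proof (cases t)
    case Nil
    then have "g [] = []" "g [d] = []" for d
      using t by simp_all
    then have "g z = []" for z
      by (rule RCP_unary_vanishing[OF three R])
    then show ?thesis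
      by simp
  next
    case (Cons b t')
    moreover have "length t \<le> 1"
      using t(1) by auto
    ultimately have "t = [b]"
      by simp
    then have "prefix [b] (g [])" "prefix [b] (g [d])" for d
      using t unfolding take_one_eq_singleton_iff[symmetric] by simp_all
    then have "take 1 (g z) = [b]" for z
      unfolding take_one_eq_singleton_iff by (rule RCP_unary_prefix_letter[OF three R])
    then show ?thesis
      by blast
  qed
qed (use RCP_unary_prefix_argument[OF three R] in blast)

section \<open>Functions of several arguments\<close>

lemma RCP_fix_last_argument:
  assumes "RCP (Suc k) f"
  shows "RCP k (\<lambda>xs. f (xs @ [w]))"
  unfolding RCP_def
proof (intro allI impI)
  fix \<phi> :: "'a list \<Rightarrow> 'a list" and us vs :: "'a list list"
  assume "monoid_morphism \<phi>" "length us = k" "length vs = k" "\<forall>i<k. \<phi> (us ! i) = \<phi> (vs ! i)"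
  moreover have "\<forall>i<Suc k. \<phi> ((us @ [w]) ! i) = \<phi> ((vs @ [w]) ! i)"
    using calculation by (auto simp: nth_append less_Suc_eq)
  ultimately show "\<phi> (f (us @ [w])) = \<phi> (f (vs @ [w]))"
    using assms unfolding RCP_def by auto
qed

lemma RCP_unary_last_argument:
  assumes "RCP (Suc k) f" and "length xs = k"
  shows "RCP_unary (\<lambda>w. f (xs @ [w]))"
  unfolding RCP_unary_def
proof (intro allI impI)
  fix h :: "'a \<Rightarrow> 'a list" and u v :: "'a list"
  assume "morph h u = morph h v"
  then have "\<forall>i<Suc k. morph h ((xs @ [u]) ! i) = morph h ((xs @ [v]) ! i)"
    using assms(2) by (auto simp: nth_append less_Suc_eq)
  then show "morph h (f (xs @ [u])) = morph h (f (xs @ [v]))"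
    using assms monoid_morphism_morph[of h] unfolding RCP_def by auto
qed

lemma two_block_common_projection:
  fixes G :: "'a::finite list list \<Rightarrow> 'a list \<Rightarrow> 'a list"
  assumes three: "card (UNIV :: 'a set) \<ge> 3"
    and last_block: "\<And>xs. length xs = k \<Longrightarrow> (\<exists>t. \<forall>w. take 1 (G xs w) = t) \<or> (\<forall>w. prefix w (G xs w))"
    and projections: "\<And>w. \<exists>i<k. \<forall>xs. length xs = k \<longrightarrow> prefix (xs ! i) (G xs w)"
  shows "\<exists>i<k. \<forall>xs w. length xs = k \<longrightarrow> prefix (xs ! i) (G xs w)"
proof -
  obtain i where i: "i < k" "\<And>xs. length xs = k \<Longrightarrow> prefix (xs ! i) (G xs [])"
    using projections by blast
  have "prefix (xs ! i) (G xs w)" if "length xs = k" for xs w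
  proof (cases "w = []")
    case True
    then show ?thesis using i that by simp
  next
    case False
    obtain j where j: "j < k" "\<And>xs. length xs = k \<Longrightarrow> prefix (xs ! j) (G xs w)"
      using projections by blast
    have "j = i"
    proof (rule ccontr)
      assume "j \<noteq> i"
      obtain d where d: "d \<noteq> hd w"
        using ex_third_letter[OF three] by blast
      obtain c where c: "c \<noteq> d"
        using ex_third_letter[OF three] by blast
      define ys where "ys = (replicate k [c])[j := [d]]"
      have ys: "length ys = k" "ys ! i = [c]" "ys ! j = [d]"
        using i(1) j(1) \<open>j \<noteq> i\<close> by (simp_all add: ys_def)
      have "take 1 (G ys []) = [c]" "take 1 (G ys w) = [d]"
        using take_one_prefix[OF i(2)[OF ys(1)]] take_one_prefix[OF j(2)[OF ys(1)]] ys by simp_all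
      moreover have "take 1 (G ys w) = take 1 w" if "prefix w (G ys w)"
        using take_one_prefix[OF that False] .
      ultimately show False
        using last_block[OF ys(1)] c d False by (cases w) force+
    qed
    then show ?thesis
      using j(2) that by simp
  qed
  then show ?thesis
    using i(1) by blast
qed

lemma two_block_constant_first_letter:
  fixes G :: "'a::finite list list \<Rightarrow> 'a list \<Rightarrow> 'a list"
  assumes three: "card (UNIV :: 'a set) \<ge> 3"
    and first_block: "\<And>w. (\<exists>t. \<forall>xs. length xs = k \<longrightarrow> take 1 (G xs w) = t)
      \<or> (\<exists>i<k. \<forall>xs. length xs = k \<longrightarrow> prefix (xs ! i) (G xs w))"
    and last_block: "\<And>xs. length xs = k \<Longrightarrow> (\<exists>t. \<forall>w. take 1 (G xs w) = t) \<or> (\<forall>w. prefix w (G xs w))"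
    and column: "\<And>xs. length xs = k \<Longrightarrow> take 1 (G xs w\<^sub>1) = t"
    and row: "length xs\<^sub>1 = k" "\<And>w. take 1 (G xs\<^sub>1 w) = t"
    and "length xs = k"
  shows "take 1 (G xs w) = t"
  using last_block[OF \<open>length xs = k\<close>]
proof
  assume "\<exists>t'. \<forall>w. take 1 (G xs w) = t'"
  then show ?thesis
    using column[OF \<open>length xs = k\<close>] by metis
next
  assume identity: "\<forall>w. prefix w (G xs w)"
  obtain a where a: "a \<noteq> hd t"
    using ex_third_letter[OF three] by blast
  obtain d where d: "d \<noteq> hd t" "d \<noteq> a"
    using ex_third_letter[OF three] by blast
  have at_xs: "take 1 (G xs [a]) = [a]"
    using take_one_prefix[of "[a]"] identity by simp
  from first_block[of "[a]"] show ?thesis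
  proof (elim disjE exE conjE)
    fix t' assume "\<forall>ys. length ys = k \<longrightarrow> take 1 (G ys [a]) = t'"
    then have "t = [a]"
      using row at_xs \<open>length xs = k\<close> by metis
    then show ?thesis
      using a by simp
  next
    fix j assume "j < k" and proj: "\<forall>ys. length ys = k \<longrightarrow> prefix (ys ! j) (G ys [a])"
    define ys where "ys = replicate k [d]"
    have ys: "length ys = k" "ys ! j = [d]"
      using \<open>j < k\<close> by (simp_all add: ys_def)
    have at_a: "take 1 (G ys [a]) = [d]"
      unfolding take_one_eq_singleton_iff using proj ys by metis
    have at_w\<^sub>1: "take 1 (G ys w\<^sub>1) = t"
      using column ys(1) .
    from last_block[OF ys(1)] have False
    proof
      assume "\<exists>t'. \<forall>w. take 1 (G ys w) = t'"
      then have "t = [d]"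
        using at_a at_w\<^sub>1 by metis
      then show False
        using d by simp
    next
      assume "\<forall>w. prefix w (G ys w)"
      then have "take 1 (G ys [a]) = [a]"
        unfolding take_one_eq_singleton_iff by simp
      then show False
        using at_a d by simp
    qed
    then show ?thesis ..
  qed
qed

lemma two_block_cases:
  fixes G :: "'a::finite list list \<Rightarrow> 'a list \<Rightarrow> 'a list"
  assumes three: "card (UNIV :: 'a set) \<ge> 3"
    and first_block: "\<And>w. (\<exists>t. \<forall>xs. length xs = k \<longrightarrow> take 1 (G xs w) = t)
      \<or> (\<exists>i<k. \<forall>xs. length xs = k \<longrightarrow> prefix (xs ! i) (G xs w))"
    and last_block: "\<And>xs. length xs = k \<Longrightarrow> (\<exists>t. \<forall>w. take 1 (G xs w) = t) \<or> (\<forall>w. prefix w (G xs w))"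
  shows "(\<exists>t. \<forall>xs w. length xs = k \<longrightarrow> take 1 (G xs w) = t)
    \<or> (\<exists>i<k. \<forall>xs w. length xs = k \<longrightarrow> prefix (xs ! i) (G xs w))
    \<or> (\<forall>xs w. length xs = k \<longrightarrow> prefix w (G xs w))"
proof (cases "\<forall>w. \<exists>i<k. \<forall>xs. length xs = k \<longrightarrow> prefix (xs ! i) (G xs w)")
  case True
  then have "\<exists>i<k. \<forall>xs w. length xs = k \<longrightarrow> prefix (xs ! i) (G xs w)"
    by (intro two_block_common_projection[where G = G and k = k, OF three last_block]) blast+
  then show ?thesis
    by blast
next
  case False
  then obtain w\<^sub>1 t where column: "\<And>xs. length xs = k \<Longrightarrow> take 1 (G xs w\<^sub>1) = t"
    using first_block by blast
  show ?thesis
  proof (cases "\<forall>xs. length xs = k \<longrightarrow> (\<forall>w. prefix w (G xs w))")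
    case False
    then obtain xs\<^sub>1 t' where xs\<^sub>1: "length xs\<^sub>1 = k" and row: "\<And>w. take 1 (G xs\<^sub>1 w) = t'"
      using last_block by blast
    then have "t' = t"
      using column by metis
    then have "\<forall>xs w. length xs = k \<longrightarrow> take 1 (G xs w) = t"
      using two_block_constant_first_letter[where G = G and k = k, OF three first_block last_block column xs\<^sub>1] row
      by blast
    then show ?thesis
      by blast
  qed blast
qed

lemma all_length_Suc_iff:
  "(\<forall>ys. length ys = Suc k \<longrightarrow> P ys) \<longleftrightarrow> (\<forall>xs w. length xs = k \<longrightarrow> P (xs @ [w]))"
  by (metis length_Suc_conv_rev length_append_singleton)

theorem RCP_classification:
  fixes f :: "'a::finite list list \<Rightarrow> 'a list"
  assumes three: "card (UNIV :: 'a set) \<ge> 3" and "RCP k f"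
  shows "(\<exists>t. \<forall>xs. length xs = k \<longrightarrow> take 1 (f xs) = t)
    \<or> (\<exists>i<k. \<forall>xs. length xs = k \<longrightarrow> prefix (xs ! i) (f xs))"
  using \<open>RCP k f\<close>
proof (induction k arbitrary: f)
  case 0
  then show ?case
    by auto
next
  case (Suc k)
  have "(\<exists>t. \<forall>xs w. length xs = k \<longrightarrow> take 1 (f (xs @ [w])) = t)
    \<or> (\<exists>i<k. \<forall>xs w. length xs = k \<longrightarrow> prefix (xs ! i) (f (xs @ [w])))
    \<or> (\<forall>xs w. length xs = k \<longrightarrow> prefix w (f (xs @ [w])))"
    using two_block_cases[OF three Suc.IH[OF RCP_fix_last_argument[OF Suc.prems]]
        RCP_unary_cases[OF three RCP_unary_last_argument[OF Suc.prems]]] .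
  then show ?case
  proof (elim disjE exE conjE)
    fix t assume "\<forall>xs w. length xs = k \<longrightarrow> take 1 (f (xs @ [w])) = t"
    then show ?case
      unfolding all_length_Suc_iff by blast
  next
    fix i assume "i < k" and "\<forall>xs w. length xs = k \<longrightarrow> prefix (xs ! i) (f (xs @ [w]))"
    then have "i < Suc k" "\<forall>ys. length ys = Suc k \<longrightarrow> prefix (ys ! i) (f ys)"
      unfolding all_length_Suc_iff by (simp_all add: nth_append)
    then show ?case
      by blast
  next
    assume "\<forall>xs w. length xs = k \<longrightarrow> prefix w (f (xs @ [w]))"
    then have "\<forall>ys. length ys = Suc k \<longrightarrow> prefix (ys ! k) (f ys)"
      unfolding all_length_Suc_iff by (simp add: nth_append)
    then show ?case
      by blast
  qed
qed

corollary RCP_cases: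
  fixes f :: "'a::finite list list \<Rightarrow> 'a list"
  assumes three: "card (UNIV :: 'a set) \<ge> 3" and "RCP k f"
  shows "(\<exists>b. \<forall>xs. length xs = k \<longrightarrow> prefix [b] (f xs))
    \<or> (\<exists>i<k. \<forall>xs. length xs = k \<longrightarrow> prefix (xs ! i) (f xs))
    \<or> (\<forall>xs. length xs = k \<longrightarrow> f xs = [])"
  using RCP_classification[OF assms]
proof (elim disjE exE)
  fix t assume t: "\<forall>xs. length xs = k \<longrightarrow> take 1 (f xs) = t"
  have "length t = length (take 1 (f (replicate k [])))"
    using t by simp
  then have "length t \<le> 1"
    by simp
  then consider "t = []" | b where "t = [b]"
    by (cases t) auto
  then show ?thesis
  proof cases
    case 1
    then show ?thesis
      using t by simp
  next
    case (2 b)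
    then have "\<forall>xs. length xs = k \<longrightarrow> prefix [b] (f xs)"
      unfolding take_one_eq_singleton_iff[symmetric] using t by simp
    then show ?thesis
      by blast
  qed
qed blast

lemma constant_letter_projection_vanishing_exclusive:
  fixes f :: "'a list list \<Rightarrow> 'a list"
  assumes "k \<ge> 1" and other_letter: "\<And>b. \<exists>c::'a. c \<noteq> b"
  shows "\<not> ((\<exists>b. \<forall>xs. length xs = k \<longrightarrow> prefix [b] (f xs))
      \<and> (\<exists>i<k. \<forall>xs. length xs = k \<longrightarrow> prefix (xs ! i) (f xs)))"
    and "\<not> ((\<exists>b. \<forall>xs. length xs = k \<longrightarrow> prefix [b] (f xs)) \<and> (\<forall>xs. length xs = k \<longrightarrow> f xs = []))"
    and "\<not> ((\<exists>i<k. \<forall>xs. length xs = k \<longrightarrow> prefix (xs ! i) (f xs)) \<and> (\<forall>xs. length xs = k \<longrightarrow> f xs = []))"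
proof -
  have prefix_letter: "prefix [c] (f (replicate k [c]))"
    if "\<forall>xs. length xs = k \<longrightarrow> prefix (xs ! i) (f xs)" "i < k" for c i
    using that(1)[rule_format, of "replicate k [c]"] that(2) by simp
  show "\<not> ((\<exists>b. \<forall>xs. length xs = k \<longrightarrow> prefix [b] (f xs))
      \<and> (\<exists>i<k. \<forall>xs. length xs = k \<longrightarrow> prefix (xs ! i) (f xs)))"
  proof
    assume "(\<exists>b. \<forall>xs. length xs = k \<longrightarrow> prefix [b] (f xs))
      \<and> (\<exists>i<k. \<forall>xs. length xs = k \<longrightarrow> prefix (xs ! i) (f xs))"
    then obtain b i where b: "\<forall>xs. length xs = k \<longrightarrow> prefix [b] (f xs)"
      and i: "i < k" "\<forall>xs. length xs = k \<longrightarrow> prefix (xs ! i) (f xs)"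
      by blast
    obtain c where "c \<noteq> b"
      using other_letter by blast
    moreover have "prefix [b] (f (replicate k [c]))" "prefix [c] (f (replicate k [c]))"
      using b prefix_letter[OF i(2,1)] by simp_all
    ultimately show False
      by (auto simp: prefix_def)
  qed
  show "\<not> ((\<exists>b. \<forall>xs. length xs = k \<longrightarrow> prefix [b] (f xs)) \<and> (\<forall>xs. length xs = k \<longrightarrow> f xs = []))"
  proof
    assume "(\<exists>b. \<forall>xs. length xs = k \<longrightarrow> prefix [b] (f xs)) \<and> (\<forall>xs. length xs = k \<longrightarrow> f xs = [])"
    then obtain b where b: "\<forall>xs. length xs = k \<longrightarrow> prefix [b] (f xs)"
      and vanishing: "\<forall>xs. length xs = k \<longrightarrow> f xs = []"
      by blast
    show False
      using b[rule_format, of "replicate k []"] vanishing[rule_format, of "replicate k []"] by simp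
  qed
  show "\<not> ((\<exists>i<k. \<forall>xs. length xs = k \<longrightarrow> prefix (xs ! i) (f xs)) \<and> (\<forall>xs. length xs = k \<longrightarrow> f xs = []))"
    using prefix_letter by force
qed

lemma mem_prefix_set_iff: "v \<in> prefix_set w \<longleftrightarrow> prefix w v"
  by (auto simp: prefix_set_def prefix_def)

theorem mainTheorem18:
  fixes f :: "('a::finite) list list \<Rightarrow> 'a list" and k :: nat
  assumes "card (UNIV :: 'a set) \<ge> 3" and "k \<ge> 1" and "RCP k f"
  shows "(let C1 = (\<exists>b::'a. \<forall>xs. length xs = k \<longrightarrow> f xs \<in> prefix_set [b]);
              C2 = (\<exists>i<k. \<forall>xs. length xs = k \<longrightarrow> f xs \<in> prefix_set (xs ! i));
              C3 = (\<forall>xs. length xs = k \<longrightarrow> f xs = [])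
          in (C1 \<and> \<not> C2 \<and> \<not> C3) \<or> (\<not> C1 \<and> C2 \<and> \<not> C3) \<or> (\<not> C1 \<and> \<not> C2 \<and> C3))"
proof -
  define C1 where "C1 = (\<exists>b. \<forall>xs. length xs = k \<longrightarrow> prefix [b] (f xs))"
  define C2 where "C2 = (\<exists>i<k. \<forall>xs. length xs = k \<longrightarrow> prefix (xs ! i) (f xs))"
  define C3 where "C3 = (\<forall>xs. length xs = k \<longrightarrow> f xs = [])"
  have "\<exists>c::'a. c \<noteq> b" for b
    using ex_third_letter[OF assms(1)] by blast
  then have "\<not> (C1 \<and> C2)" "\<not> (C1 \<and> C3)" "\<not> (C2 \<and> C3)"
    unfolding C1_def C2_def C3_def
    using constant_letter_projection_vanishing_exclusive[OF assms(2)] by blast+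
  moreover have "C1 \<or> C2 \<or> C3"
    unfolding C1_def C2_def C3_def using RCP_cases[OF assms(1,3)] .
  ultimately show ?thesis
    unfolding Let_def mem_prefix_set_iff C1_def[symmetric] C2_def[symmetric] C3_def[symmetric]
    by argo
qed

end
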